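(* Let $Q\in\mathbb{C}[z_1,\dots,z_N]$ be a holomorphic polynomial. If the function $z\mapsto Q\big(\frac{z}{1-\langle z,\omega\rangle}\big)$ belongs to $L^{2N+2}(\mathbb{B}_N)$ for some $\omega$ on the unit sphere $\partial\mathbb{B}_N$, then $Q$ is constant.
   Context: $\mathbb{B}_N$ is the open unit ball of $\mathbb{C}^N$ with normalized volume measure, and $\langle z,\omega\rangle=\sum_j z_j\bar\omega_j$. *)

theory Defs
  imports "HOL-Analysis.Analysis"
begin

text \<open>Points of C^N are modelled as complex^'n with N = CARD('n).
  The ball ball 0 1 uses the Euclidean norm of complex^'n.\<close>

definition hinner :: "complex^'n \<Rightarrow> complex^'n \<Rightarrow> complex" where
  "hinner z w = (\<Sum>j\<in>UNIV. z$j * cnj (w$j))"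

definition holo_poly :: "(complex^'n \<Rightarrow> complex) \<Rightarrow> bool" where
  "holo_poly Q \<longleftrightarrow> (\<exists>(A :: ('n \<Rightarrow> nat) set) (c :: ('n \<Rightarrow> nat) \<Rightarrow> complex).
      finite A \<and> (\<forall>z. Q z = (\<Sum>\<alpha>\<in>A. c \<alpha> * (\<Prod>i\<in>UNIV. (z$i) ^ (\<alpha> i)))))"

text \<open>Membership in L^p of the unit ball (w.r.t. Lebesgue measure; normalization is irrelevant).\<close>
definition in_Lp_ball :: "real \<Rightarrow> (complex^'n \<Rightarrow> complex) \<Rightarrow> bool" where
  "in_Lp_ball p f \<longleftrightarrow>
     f \<in> borel_measurable (lebesgue_on (ball 0 1)) \<and>
     integrable (lebesgue_on (ball 0 1)) (\<lambda>z. norm (f z) powr p)"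

end

(*
  Pick a unitary U with <U y, \<omega>> = y_k, so that z / (1 - <z, \<omega>>) = U (y / (1 - y_k)) for
  z = U y.  Along the parabolic dilations y = e_k + diag(-1/t^2, 1/t, ..., 1/t) x, which push a
  parameter x near e_k towards the boundary point e_k, Q (U (y / (1 - y_k))) is a polynomial P_x(t)
  in t whose coefficients depend continuously on x.

  If every P_x is constant, then Q o U is constant on the curves at t = 1, which sweep out a
  neighbourhood of 0, so Q is constant.  Otherwise, near a parameter of maximal degree,
  |P_x(t)| >= a t for large t, uniformly on a ball B of parameters.  The rotated dilated images
  of B lie in the unit ball and have measure t^-(2N+2) |B|, so the integral of
  |Q (z / (1 - <z, \<omega>>))|^(2N+2) over them stays above a^(2N+2) |B| while their measure tends
  to 0, contradicting the absolute continuity of the integral.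
*)

theory Submission
  imports Defs "HOL-Computational_Algebra.Polynomial"
begin

section \<open>Families of polynomials with continuous coefficients\<close>

definition continuous_coeffs_on ::
    "'a::topological_space set \<Rightarrow> ('a \<Rightarrow> 'b::real_normed_field poly) \<Rightarrow> bool" where
  "continuous_coeffs_on S P \<longleftrightarrow> (\<forall>n. continuous_on S (\<lambda>x. coeff (P x) n))"

lemma continuous_coeffs_on_const: "continuous_coeffs_on S (\<lambda>x. p)"
  by (simp add: continuous_coeffs_on_def)

lemma continuous_coeffs_on_add:
  "continuous_coeffs_on S P \<Longrightarrow> continuous_coeffs_on S R \<Longrightarrow> continuous_coeffs_on S (\<lambda>x. P x + R x)"
  by (auto simp: continuous_coeffs_on_def intro!: continuous_intros)

lemma continuous_coeffs_on_smult:
  "continuous_on S a \<Longrightarrow> continuous_coeffs_on S P \<Longrightarrow> continuous_coeffs_on S (\<lambda>x. smult (a x) (P x))"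
  by (auto simp: continuous_coeffs_on_def intro!: continuous_intros)

lemma continuous_coeffs_on_pCons:
  "continuous_on S a \<Longrightarrow> continuous_coeffs_on S P \<Longrightarrow> continuous_coeffs_on S (\<lambda>x. pCons (a x) (P x))"
  unfolding continuous_coeffs_on_def
proof (intro allI)
  show "continuous_on S (\<lambda>x. coeff (pCons (a x) (P x)) n)"
    if "continuous_on S a" "\<forall>n. continuous_on S (\<lambda>x. coeff (P x) n)" for n
    using that by (cases n) simp_all
qed

lemma continuous_coeffs_on_mult:
  "continuous_coeffs_on S P \<Longrightarrow> continuous_coeffs_on S R \<Longrightarrow> continuous_coeffs_on S (\<lambda>x. P x * R x)"
  by (auto simp: continuous_coeffs_on_def coeff_mult intro!: continuous_intros)

lemma continuous_coeffs_on_sum: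
  "(\<And>i. i \<in> I \<Longrightarrow> continuous_coeffs_on S (P i)) \<Longrightarrow> continuous_coeffs_on S (\<lambda>x. \<Sum>i\<in>I. P i x)"
  by (induction I rule: infinite_finite_induct)
    (auto intro: continuous_coeffs_on_add continuous_coeffs_on_const)

lemma continuous_coeffs_on_prod:
  "(\<And>i. i \<in> I \<Longrightarrow> continuous_coeffs_on S (P i)) \<Longrightarrow> continuous_coeffs_on S (\<lambda>x. \<Prod>i\<in>I. P i x)"
  by (induction I rule: infinite_finite_induct)
    (auto intro: continuous_coeffs_on_mult continuous_coeffs_on_const)

lemma continuous_coeffs_on_power:
  "continuous_coeffs_on S P \<Longrightarrow> continuous_coeffs_on S (\<lambda>x. P x ^ m)"
  using continuous_coeffs_on_prod[of "{..<m}" S "\<lambda>_. P"] by simp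

lemma norm_poly_ge_linear:
  fixes p :: "'a::real_normed_field poly"
  assumes "degree p \<le> n" "1 \<le> n" "0 < a" "a \<le> norm (coeff p n)"
    "(\<Sum>i<n. norm (coeff p i)) \<le> C" "1 \<le> t" "2 * C / a \<le> t"
  shows "a / 2 * t \<le> norm (poly p (of_real t))"
proof -
  have "poly p (of_real t) = (\<Sum>i\<le>n. coeff p i * of_real t ^ i)"
    unfolding poly_altdef using assms(1)
    by (intro sum.mono_neutral_left) (auto simp: coeff_eq_0)
  then have split: "poly p (of_real t) = coeff p n * of_real t ^ n + (\<Sum>i<n. coeff p i * of_real t ^ i)"
    by (simp add: lessThan_Suc_atMost[symmetric])
  have tn: "t ^ n = t * t ^ (n - 1)"
    using assms(2) by (simp flip: power_Suc)
  have "norm (\<Sum>i<n. coeff p i * of_real t ^ i) \<le> (\<Sum>i<n. norm (coeff p i) * t ^ (n - 1))"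
    using assms(6)
    by (intro order.trans[OF norm_sum] sum_mono)
      (auto simp: norm_mult norm_power intro!: mult_left_mono power_increasing)
  also have "\<dots> \<le> C * t ^ (n - 1)"
    using assms(5,6) by (simp add: sum_distrib_right[symmetric] mult_right_mono)
  also have "\<dots> \<le> a / 2 * t ^ n"
    using assms(3,6,7) by (simp add: tn field_simps mult_right_mono)
  finally have small: "norm (\<Sum>i<n. coeff p i * of_real t ^ i) \<le> a / 2 * t ^ n" .
  have big: "a * t ^ n \<le> norm (coeff p n * of_real t ^ n)"
    using assms(4,6) by (simp add: norm_mult norm_power mult_right_mono)
  have "a / 2 * t \<le> a / 2 * t ^ n"
    using assms(2,3,6) by (simp add: tn)
  also have "\<dots> \<le> norm (poly p (of_real t))"
    unfolding split using big small
      norm_diff_ineq[of "coeff p n * of_real t ^ n" "\<Sum>i<n. coeff p i * of_real t ^ i"] by linarith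
  finally show ?thesis .
qed

lemma linear_growth_near_max_degree:
  fixes P :: "'a::metric_space \<Rightarrow> 'b::real_normed_field poly"
  assumes P: "continuous_coeffs_on S P" and S: "open S" "x0 \<in> S"
    and max: "\<And>x. x \<in> S \<Longrightarrow> degree (P x) \<le> degree (P x0)" and pos: "0 < degree (P x0)"
  obtains r a t0 where "0 < r" "ball x0 r \<subseteq> S" "0 < a"
    "\<And>x t. x \<in> ball x0 r \<Longrightarrow> t0 \<le> t \<Longrightarrow> a * t \<le> norm (poly (P x) (of_real t))"
proof -
  define n where "n = degree (P x0)"
  define a where "a = norm (coeff (P x0) n) / 2"
  define C where "C x = (\<Sum>i<n. norm (coeff (P x) i))" for x
  have "0 < a"
    using pos by (cases "P x0 = 0") (auto simp: a_def n_def)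
  have "continuous_on S (\<lambda>x. coeff (P x) n)" "continuous_on S C"
    using P unfolding continuous_coeffs_on_def C_def by (auto intro!: continuous_intros)
  then obtain r1 r2 where r: "0 < r1" "0 < r2"
    "\<And>x. x \<in> S \<Longrightarrow> dist x x0 < r1 \<Longrightarrow> dist (coeff (P x) n) (coeff (P x0) n) < a"
    "\<And>x. x \<in> S \<Longrightarrow> dist x x0 < r2 \<Longrightarrow> dist (C x) (C x0) < 1"
    using S(2) \<open>0 < a\<close> unfolding continuous_on_iff by (metis zero_less_one)
  obtain r3 where "0 < r3" "ball x0 r3 \<subseteq> S"
    using S open_contains_ball by blast
  define r where "r = min r1 (min r2 r3)"
  have "ball x0 r \<subseteq> S"
    using \<open>ball x0 r3 \<subseteq> S\<close> by (auto simp: r_def)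
  have growth: "a / 2 * t \<le> norm (poly (P x) (of_real t))"
    if x: "x \<in> ball x0 r" and t: "max 1 (2 * (C x0 + 1) / a) \<le> t" for x t
  proof (rule norm_poly_ge_linear)
    have "x \<in> S" "dist x x0 < r"
      using x \<open>ball x0 r \<subseteq> S\<close> by (auto simp: dist_commute)
    then show "degree (P x) \<le> n"
      using max by (simp add: n_def)
    have "dist (coeff (P x) n) (coeff (P x0) n) < a"
      using r(3) \<open>x \<in> S\<close> \<open>dist x x0 < r\<close> by (simp add: r_def)
    then show "a \<le> norm (coeff (P x) n)"
      using norm_triangle_ineq3[of "coeff (P x0) n" "coeff (P x) n"]
      by (simp add: a_def dist_norm norm_minus_commute)
    have "dist (C x) (C x0) < 1"
      using r(4) \<open>x \<in> S\<close> \<open>dist x x0 < r\<close> by (simp add: r_def)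
    then show "(\<Sum>i<n. norm (coeff (P x) i)) \<le> C x0 + 1"
      by (simp add: C_def dist_real_def)
  qed (use pos t \<open>0 < a\<close> in \<open>auto simp: n_def\<close>)
  have "0 < r"
    using r \<open>0 < r3\<close> by (simp add: r_def)
  show ?thesis
    by (rule that[OF \<open>0 < r\<close> \<open>ball x0 r \<subseteq> S\<close>, of "a / 2" "max 1 (2 * (C x0 + 1) / a)"])
      (use \<open>0 < a\<close> growth in auto)
qed

lemma continuous_coeffs_constant_or_linear_growth:
  fixes P :: "'a::metric_space \<Rightarrow> 'b::real_normed_field poly"
  assumes P: "continuous_coeffs_on S P" "open S" "\<And>x. x \<in> S \<Longrightarrow> degree (P x) \<le> D"
  obtains "\<And>x. x \<in> S \<Longrightarrow> degree (P x) = 0"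
    | x0 r a t0 where "0 < r" "ball x0 r \<subseteq> S" "0 < a"
      "\<And>x t. x \<in> ball x0 r \<Longrightarrow> t0 \<le> t \<Longrightarrow> a * t \<le> norm (poly (P x) (of_real t))"
proof (cases "\<forall>x\<in>S. degree (P x) = 0")
  case False
  then obtain x1 where x1: "x1 \<in> S" "0 < degree (P x1)"
    by blast
  define degs where "degs = (\<lambda>x. degree (P x)) ` S"
  have "finite degs"
    using P(3) by (auto simp: degs_def intro: finite_subset[of _ "{..D}"])
  moreover have "degs \<noteq> {}"
    using x1(1) by (auto simp: degs_def)
  ultimately have "Max degs \<in> degs"
    by (rule Max_in)
  then obtain x0 where x0: "x0 \<in> S" "degree (P x0) = Max degs"
    unfolding degs_def by (metis imageE)
  have "\<And>x. x \<in> S \<Longrightarrow> degree (P x) \<le> degree (P x0)"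
    using \<open>finite degs\<close> by (simp add: x0(2) degs_def)
  with linear_growth_near_max_degree[OF P(1,2) x0(1)] x1 show ?thesis
    by (metis that(2) gr0I le_0_eq)
qed (use that(1) in blast)

lemma norm_vector_scalar_mult:
  fixes x :: "'a::real_normed_field ^'n"
  shows "norm (c *s x) = norm c * norm x"
  by (simp add: norm_vec_def norm_mult L2_set_right_distrib)

definition subst_mpoly ::
    "('n::finite \<Rightarrow> nat) set \<Rightarrow> (('n \<Rightarrow> nat) \<Rightarrow> 'a::comm_ring_1) \<Rightarrow> ('n \<Rightarrow> 'a poly) \<Rightarrow> 'a poly" where
  "subst_mpoly A c p = (\<Sum>\<alpha>\<in>A. smult (c \<alpha>) (\<Prod>i\<in>UNIV. p i ^ \<alpha> i))"

lemma poly_subst_mpoly: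
  "poly (subst_mpoly A c p) t = (\<Sum>\<alpha>\<in>A. c \<alpha> * (\<Prod>i\<in>UNIV. poly (p i) t ^ \<alpha> i))"
  by (simp add: subst_mpoly_def poly_sum poly_prod)

lemma continuous_coeffs_on_subst_mpoly:
  "(\<And>i. continuous_coeffs_on S (\<lambda>x. p x i)) \<Longrightarrow> continuous_coeffs_on S (\<lambda>x. subst_mpoly A c (p x))"
  unfolding subst_mpoly_def
  by (intro continuous_coeffs_on_sum continuous_coeffs_on_smult continuous_coeffs_on_prod
      continuous_coeffs_on_power continuous_on_const)

lemma degree_subst_mpoly_le:
  assumes "\<And>i. degree (p i) \<le> d"
  shows "degree (subst_mpoly A c p) \<le> (\<Sum>\<alpha>\<in>A. d * sum \<alpha> UNIV)"
  unfolding subst_mpoly_def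
proof (cases "finite A")
  case True
  show "degree (\<Sum>\<alpha>\<in>A. smult (c \<alpha>) (\<Prod>i\<in>UNIV. p i ^ \<alpha> i)) \<le> (\<Sum>\<alpha>\<in>A. d * sum \<alpha> UNIV)"
  proof (rule degree_sum_le[OF True order.trans[OF degree_smult_le]])
    fix \<alpha> assume "\<alpha> \<in> A"
    have "degree (\<Prod>i\<in>UNIV. p i ^ \<alpha> i) \<le> (\<Sum>i\<in>UNIV. degree (p i ^ \<alpha> i))"
      using degree_prod_sum_le[of UNIV "\<lambda>i. p i ^ \<alpha> i"] by (simp add: o_def)
    also have "\<dots> \<le> (\<Sum>i\<in>UNIV. d * \<alpha> i)"
      using assms by (intro sum_mono order.trans[OF degree_power_le]) (simp add: mult.commute)
    also have "\<dots> \<le> (\<Sum>\<alpha>\<in>A. d * sum \<alpha> UNIV)"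
      using member_le_sum[of \<alpha> A "\<lambda>\<alpha>. d * sum \<alpha> UNIV"] \<open>\<alpha> \<in> A\<close> True
      by (simp add: sum_distrib_left)
    finally show "degree (\<Prod>i\<in>UNIV. p i ^ \<alpha> i) \<le> (\<Sum>\<alpha>\<in>A. d * sum \<alpha> UNIV)" .
  qed
qed simp

lemma linear_poly_curve:
  fixes U :: "'a::field ^'m \<Rightarrow> 'a ^'n"
  assumes "Vector_Spaces.linear (*s) (*s) U"
  shows "U (\<chi> j. poly (p j) t) = (\<chi> i. poly (\<Sum>j\<in>UNIV. smult (U (axis j 1) $ i) (p j)) t)"
  unfolding vec_eq_iff by (subst linear_componentwise[OF assms]) (simp add: poly_sum mult.commute)

lemma holo_poly_along_linear_poly_curves:
  fixes Q :: "complex^'n \<Rightarrow> complex" and p :: "'a::topological_space \<Rightarrow> 'n \<Rightarrow> complex poly"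
  assumes "holo_poly Q" and U: "Vector_Spaces.linear (*s) (*s) U"
    and p: "\<And>j. continuous_coeffs_on S (\<lambda>x. p x j)" "\<And>x j. degree (p x j) \<le> d"
  obtains P D where "continuous_coeffs_on S P" "\<And>x. degree (P x) \<le> D"
    "\<And>x t. Q (U (\<chi> j. poly (p x j) t)) = poly (P x) t"
proof -
  obtain A c where Q: "\<And>z. Q z = (\<Sum>\<alpha>\<in>A. c \<alpha> * (\<Prod>i\<in>UNIV. z $ i ^ \<alpha> i))"
    using assms(1) unfolding holo_poly_def by blast
  define q where "q x i = (\<Sum>j\<in>UNIV. smult (U (axis j 1) $ i) (p x j))" for x i
  have "continuous_coeffs_on S (\<lambda>x. subst_mpoly A c (q x))"
    unfolding q_def
    by (intro continuous_coeffs_on_subst_mpoly continuous_coeffs_on_sum continuous_coeffs_on_smult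
        continuous_on_const p)
  moreover have "degree (q x i) \<le> d" for x i
    unfolding q_def by (intro degree_sum_le order.trans[OF degree_smult_le] p) simp
  then have "degree (subst_mpoly A c (q x)) \<le> (\<Sum>\<alpha>\<in>A. d * sum \<alpha> UNIV)" for x
    by (rule degree_subst_mpoly_le)
  moreover have "Q (U (\<chi> j. poly (p x j) t)) = poly (subst_mpoly A c (q x)) t" for x t
    by (simp add: linear_poly_curve[OF U] Q poly_subst_mpoly q_def)
  ultimately show ?thesis by (rule that)
qed

lemma holo_poly_constant_near_0:
  fixes Q :: "complex^'n \<Rightarrow> complex"
  assumes "holo_poly Q" "0 < r" "\<And>z. norm z < r \<Longrightarrow> Q z = c"
  shows "Q z = c"
proof -
  obtain P :: "real \<Rightarrow> complex poly" and D where "\<And>x s. Q (id (\<chi> i. poly [:0, z $ i:] s)) = poly (P x) s"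
    by (rule holo_poly_along_linear_poly_curves[OF assms(1) vec.linear_id,
          where p = "\<lambda>_ i. [:0, z $ i:]" and d = 1 and S = UNIV])
      (auto simp: continuous_coeffs_on_const degree_pCons_le simp del: id_apply)
  then have P: "poly (P 0 - [:c:]) s = Q (s *s z) - c" for s
    by (simp add: vector_scalar_mult_def)
  define e where "e = r / (norm z + 1)"
  have "0 < e" using assms(2) by (simp add: e_def add_nonneg_pos)
  have "of_real ` {0<..<e} \<subseteq> {s. poly (P 0 - [:c:]) s = 0}"
  proof clarsimp
    fix s :: real assume s: "0 < s" "s < e"
    have "s * norm z < s * (norm z + 1)" using s(1) by simp
    also have "\<dots> < r" using s(2) by (simp add: e_def pos_less_divide_eq add_nonneg_pos)
    finally have "norm (of_real s *s z) < r" using s(1) by (simp add: norm_vector_scalar_mult)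
    then show "poly (P 0) (of_real s) = c" using P assms(3) by simp
  qed
  moreover have "infinite (of_real ` {0<..<e} :: complex set)"
    using \<open>0 < e\<close> by (simp add: finite_image_iff inj_on_def)
  ultimately have "P 0 - [:c:] = 0"
    using poly_roots_finite finite_subset by blast
  then show ?thesis using P[of 1] by simp
qed

section \<open>Unitary maps of \<open>\<complex>\<^sup>N\<close>\<close>

lemma hinner_add_left: "hinner (a + b) w = hinner a w + hinner b w"
  by (simp add: hinner_def sum.distrib algebra_simps)

lemma hinner_diff_left: "hinner (a - b) w = hinner a w - hinner b w"
  by (simp add: hinner_def sum_subtractf algebra_simps)

lemma hinner_scalar_mult_left: "hinner (c *s a) w = c * hinner a w"
  by (simp add: hinner_def sum_distrib_left algebra_simps)

lemma hinner_commute: "hinner b a = cnj (hinner a b)"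
  by (simp add: hinner_def mult.commute)

lemma hinner_diff_right: "hinner w (a - b) = hinner w a - hinner w b"
  by (metis hinner_commute hinner_diff_left complex_cnj_diff)

lemma hinner_scalar_mult_right: "hinner w (c *s a) = cnj c * hinner w a"
  by (metis hinner_commute hinner_scalar_mult_left complex_cnj_mult)

lemma norm_vec_power2: "(norm (z :: 'a::real_normed_vector ^'n))\<^sup>2 = (\<Sum>i\<in>UNIV. (norm (z $ i))\<^sup>2)"
  by (simp add: norm_vec_def L2_set_def sum_nonneg)

lemma hinner_self: "hinner z z = of_real ((norm z)\<^sup>2)"
  by (simp only: hinner_def norm_vec_power2 of_real_sum complex_norm_square)

lemma hinner_axis_right: "hinner w (axis k 1) = w $ k"
  by (simp add: hinner_def axis_def if_distrib cong: if_cong)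

lemma norm_eq_iff_hinner_self_eq: "norm a = norm b \<longleftrightarrow> hinner a a = hinner b b"
  by (simp only: hinner_self of_real_eq_iff power2_eq_iff_nonneg norm_ge_zero)

text \<open>For \<open>v = 0\<close> this is the identity, since division by zero yields \<open>0\<close>.\<close>

definition householder :: "complex^'n \<Rightarrow> complex^'n \<Rightarrow> complex^'n" where
  "householder v z = z - (2 * hinner z v / hinner v v) *s v"

lemma hinner_householder: "hinner (householder v a) b = hinner a (householder v b)"
proof -
  have "cnj (hinner v v) = hinner v v"
    by (simp add: hinner_self)
  then have "(2 * hinner a v / hinner v v) * hinner v b = cnj (2 * hinner b v / hinner v v) * hinner a v"
    by (simp add: hinner_commute[of v b])
  then show ?thesis
    by (simp add: householder_def hinner_diff_left hinner_diff_right hinner_scalar_mult_left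
        hinner_scalar_mult_right)
qed

lemma householder_householder: "householder v (householder v z) = z"
proof (cases "hinner v v = 0")
  case False
  then have "hinner (householder v z) v = - hinner z v"
    by (simp add: householder_def hinner_diff_left hinner_scalar_mult_left)
  then show ?thesis
    using False by (simp add: householder_def vec_eq_iff algebra_simps)
qed (simp add: householder_def)

lemma norm_householder: "norm (householder v z) = norm z"
  by (simp add: norm_eq_iff_hinner_self_eq hinner_householder householder_householder)

lemma linear_householder: "Vector_Spaces.linear (*s) (*s) (householder v)"
  unfolding Vector_Spaces.linear_iff
  by (simp add: vec.vector_space_axioms householder_def hinner_add_left hinner_scalar_mult_left
      vec_eq_iff add_divide_distrib algebra_simps)

lemma householder_swap:
  assumes "norm a = norm b" "cnj (hinner a b) = hinner a b"
  shows "householder (a - b) a = b"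
proof (cases "a = b")
  case False
  have "hinner (a - b) (a - b) = 2 * hinner a (a - b)"
    using assms hinner_commute[of b a]
    by (simp add: hinner_diff_left hinner_diff_right norm_eq_iff_hinner_self_eq)
  moreover have "hinner (a - b) (a - b) \<noteq> 0"
    using False by (simp add: hinner_self)
  ultimately show ?thesis
    by (simp add: householder_def)
qed (simp add: householder_def)

lemma unitary_with_coordinate:
  fixes \<omega> :: "complex^'n"
  assumes "norm \<omega> = 1"
  obtains U :: "complex^'n \<Rightarrow> complex^'n"
  where "Vector_Spaces.linear (*s) (*s) U" "\<And>y. norm (U y) = norm y" "\<And>y. hinner (U y) \<omega> = y $ k"
proof -
  define \<mu> :: complex where "\<mu> = (if \<omega> $ k = 0 then 1 else sgn (\<omega> $ k))"
  have "norm \<mu> = 1"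
    by (simp add: \<mu>_def norm_sgn)
  then have \<mu>: "\<mu> * cnj \<mu> = 1"
    by (metis complex_norm_square of_real_1 power_one)
  define b where "b = \<mu> *s axis k 1"
  have "hinner (axis k 1) (axis k 1) = (1::complex)"
    by (simp add: hinner_axis_right)
  then have "norm b = norm \<omega>"
    using assms \<open>norm \<mu> = 1\<close> by (simp add: b_def norm_vector_scalar_mult hinner_self)
  moreover have "hinner \<omega> b = of_real (norm (\<omega> $ k))"
  proof (cases "\<omega> $ k = 0")
    case False
    have "cnj (\<omega> $ k) * \<omega> $ k = of_real (norm (\<omega> $ k)) * of_real (norm (\<omega> $ k))"
      by (metis complex_norm_square mult.commute of_real_mult power2_eq_square)
    then show ?thesis
      using False by (simp add: b_def \<mu>_def hinner_scalar_mult_right hinner_axis_right sgn_div_norm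
          scaleR_conv_of_real mult.assoc)
  qed (simp add: b_def hinner_scalar_mult_right hinner_axis_right)
  ultimately have swap: "householder (\<omega> - b) \<omega> = b"
    by (intro householder_swap) auto
  show ?thesis
  proof (rule that[of "\<lambda>y. householder (\<omega> - b) (\<mu> *s y)"])
    show "Vector_Spaces.linear (*s) (*s) (\<lambda>y. householder (\<omega> - b) (\<mu> *s y))"
      using Vector_Spaces.linear_compose[OF vec.linear_scale_self linear_householder]
      by (simp add: o_def)
    show "norm (householder (\<omega> - b) (\<mu> *s y)) = norm y" for y
      using \<open>norm \<mu> = 1\<close> by (simp add: norm_householder norm_vector_scalar_mult)
    show "hinner (householder (\<omega> - b) (\<mu> *s y)) \<omega> = y $ k" for y
      using \<mu> unfolding hinner_householder swap
      by (simp add: b_def hinner_scalar_mult_left hinner_scalar_mult_right hinner_axis_right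
          mult.assoc[symmetric] mult.commute[of "cnj \<mu>"])
  qed
qed

lemma isometric_linear_dist:
  assumes "Vector_Spaces.linear (*s) (*s) U" "\<And>y. norm (U y) = norm y"
  shows "dist (U x) (U y) = dist x y"
proof -
  interpret U: Vector_Spaces.linear "(*s)" "(*s)" U by fact
  show ?thesis
    by (simp add: dist_norm assms(2) flip: U.diff)
qed

lemma isometric_linear_bij:
  fixes U :: "'a::real_normed_field ^'n \<Rightarrow> 'a ^'n"
  assumes "Vector_Spaces.linear (*s) (*s) U" "\<And>y. norm (U y) = norm y"
  shows "bij U"
proof -
  have "inj U"
    by (rule injI) (metis isometric_linear_dist[OF assms] dist_eq_0_iff)
  then show ?thesis
    using vec.linear_inj_imp_surj[OF assms(1)] by (simp add: bij_def)
qed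

section \<open>Lebesgue measure of isometric and diagonal images\<close>

lemma isometry_image_ball:
  assumes "bij F" "\<And>x y. dist (F x) (F y) = dist x y"
  shows "F ` ball c r = ball (F c) r"
proof
  show "ball (F c) r \<subseteq> F ` ball c r"
  proof
    fix z assume "z \<in> ball (F c) r"
    moreover obtain x where "z = F x"
      using assms(1) by (metis bij_pointE)
    ultimately show "z \<in> F ` ball c r"
      using assms(2) by auto
  qed
qed (use assms(2) in auto)

lemma open_isometry_image:
  assumes "bij F" "\<And>x y. dist (F x) (F y) = dist x y" "open S"
  shows "open (F ` S)"
  unfolding open_contains_ball
proof
  fix z assume "z \<in> F ` S"
  then obtain x e where "z = F x" "0 < e" "ball x e \<subseteq> S"
    using assms(3) open_contains_ball by blast
  then show "\<exists>e>0. ball z e \<subseteq> F ` S"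
    using isometry_image_ball[OF assms(1,2), of x e] by blast
qed

lemma Vitali_open_disjoint_balls:
  fixes S :: "'a::euclidean_space set"
  assumes "open S"
  obtains C where "countable C" "disjoint_family_on (\<lambda>i. ball (fst i) (snd i)) C"
    "\<And>i. i \<in> C \<Longrightarrow> 0 < snd i \<and> ball (fst i) (snd i) \<subseteq> S"
    "emeasure lborel S = emeasure lborel (\<Union>i\<in>C. ball (fst i) (snd i))"
proof -
  define K where "K = {(c, r). 0 < r \<and> ball c r \<subseteq> S}"
  have "\<exists>i. i \<in> K \<and> x \<in> ball (fst i) (snd i) \<and> snd i < d" if "x \<in> S" "0 < d" for x d
  proof -
    obtain e where "0 < e" "ball x e \<subseteq> S"
      using \<open>open S\<close> \<open>x \<in> S\<close> open_contains_ball by blast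
    then show ?thesis
      using \<open>0 < d\<close> by (intro exI[of _ "(x, min e (d / 2))"]) (auto simp: K_def)
  qed
  then obtain C where C: "countable C" "C \<subseteq> K"
    and disj: "pairwise (\<lambda>i j. disjnt (ball (fst i) (snd i)) (ball (fst j) (snd j))) C"
    and null: "negligible (S - (\<Union>i\<in>C. ball (fst i) (snd i)))"
    by (rule Vitali_covering_theorem_balls)
  define U where "U = (\<Union>i\<in>C. ball (fst i) (snd i))"
  have "open U"
    by (auto simp: U_def)
  have "S - U \<in> null_sets lborel"
  proof -
    have "S - U \<in> null_sets lebesgue"
      using null by (simp add: U_def negligible_iff_null_sets)
    moreover have "S - U \<in> sets lborel"
      using \<open>open S\<close> \<open>open U\<close> by (auto intro: borel_open)
    ultimately show ?thesis
      using null_sets_completion_iff by blast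
  qed
  moreover have "U \<subseteq> S"
    using C(2) by (fastforce simp: U_def K_def)
  ultimately have "emeasure lborel S = emeasure lborel U"
    using emeasure_Un_null_set[of U lborel "S - U"] \<open>open U\<close> by (simp add: borel_open Un_absorb1)
  moreover have "disjoint_family_on (\<lambda>i. ball (fst i) (snd i)) C"
    using disj by (auto simp: disjoint_family_on_def pairwise_def disjnt_def)
  ultimately show ?thesis
    using that C by (fastforce simp: U_def K_def)
qed

lemma emeasure_isometry_image_ge:
  fixes F :: "'a::euclidean_space \<Rightarrow> 'a"
  assumes F: "bij F" "\<And>x y. dist (F x) (F y) = dist x y" and "open S"
  shows "emeasure lborel S \<le> emeasure lborel (F ` S)"
proof -
  obtain C where C: "countable C" "disjoint_family_on (\<lambda>i. ball (fst i) (snd i)) C"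
    "\<And>i. i \<in> C \<Longrightarrow> 0 < snd i \<and> ball (fst i) (snd i) \<subseteq> S"
    and S: "emeasure lborel S = emeasure lborel (\<Union>i\<in>C. ball (fst i) (snd i))"
    using Vitali_open_disjoint_balls[OF \<open>open S\<close>] by blast
  have FB: "F ` ball (fst i) (snd i) = ball (F (fst i)) (snd i)" for i
    by (rule isometry_image_ball[OF F])
  have "disjoint_family_on (\<lambda>i. ball (F (fst i)) (snd i)) C"
    using C(2) bij_is_inj[OF F(1)] unfolding FB[symmetric]
    by (auto simp: disjoint_family_on_def image_Int[symmetric])
  have "emeasure lborel S = (\<integral>\<^sup>+ i. emeasure lborel (ball (fst i) (snd i)) \<partial>count_space C)"
    unfolding S using C(1,2) by (intro emeasure_UN_countable) auto
  also have "\<dots> = (\<integral>\<^sup>+ i. emeasure lborel (ball (F (fst i)) (snd i)) \<partial>count_space C)"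
    using C(3) by (intro nn_integral_cong) (simp add: emeasure_ball less_imp_le)
  also have "\<dots> = emeasure lborel (\<Union>i\<in>C. ball (F (fst i)) (snd i))"
    using \<open>disjoint_family_on (\<lambda>i. ball (F (fst i)) (snd i)) C\<close> C(1)
    by (intro emeasure_UN_countable[symmetric]) auto
  also have "\<dots> \<le> emeasure lborel (F ` S)"
    using C(3) open_isometry_image[OF F \<open>open S\<close>] unfolding FB[symmetric]
    by (intro emeasure_mono) (auto intro: borel_open)
  finally show ?thesis .
qed

lemma emeasure_isometry_image:
  fixes F :: "'a::euclidean_space \<Rightarrow> 'a"
  assumes F: "bij F" "\<And>x y. dist (F x) (F y) = dist x y" and "open S"
  shows "emeasure lborel (F ` S) = emeasure lborel S"
proof (rule antisym)
  have "bij (inv F)"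
    using F(1) by (rule bij_imp_bij_inv)
  moreover have "dist (inv F x) (inv F y) = dist x y" for x y
    using F by (metis bij_inv_eq_iff)
  ultimately have "emeasure lborel (F ` S) \<le> emeasure lborel (inv F ` F ` S)"
    by (rule emeasure_isometry_image_ge) (rule open_isometry_image[OF F \<open>open S\<close>])
  then show "emeasure lborel (F ` S) \<le> emeasure lborel S"
    using bij_is_inj[OF F(1)] by simp
qed (rule emeasure_isometry_image_ge[OF assms])

lemma prod_Basis_vec_complex:
  "(\<Prod>j\<in>(Basis :: (complex^'n) set). f j) = (\<Prod>i\<in>UNIV. f (axis i 1) * f (axis i \<i>))"
proof -
  have "inj_on (\<lambda>(i, u). axis i u) (UNIV \<times> (Basis :: complex set))"
    by (auto simp: inj_on_def axis_eq_axis Basis_complex_def)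
  moreover have "(\<lambda>(i, u). axis i u) ` (UNIV \<times> (Basis :: complex set)) = Basis"
    by (auto simp: Basis_vec_def)
  ultimately have "(\<Prod>j\<in>(Basis :: (complex^'n) set). f j) = (\<Prod>(i, u)\<in>UNIV \<times> Basis. f (axis i u))"
    by (intro prod.reindex_cong[where l = "\<lambda>(i, u). axis i u"]) auto
  also have "\<dots> = (\<Prod>i\<in>UNIV. f (axis i 1) * f (axis i \<i>))"
    by (simp add: prod.cartesian_product[symmetric] Basis_complex_def)
  finally show ?thesis .
qed

lemma emeasure_diagonal_image:
  fixes s :: "'n::finite \<Rightarrow> real" and b :: "complex^'n"
  defines "T \<equiv> \<lambda>x. b + (\<chi> i. of_real (s i) * x $ i)"
  assumes s: "\<And>i. s i \<noteq> 0" and "open B"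
  shows "open (T ` B)" "emeasure lborel (T ` B) = ennreal (\<Prod>i\<in>UNIV. (s i)\<^sup>2) * emeasure lborel B"
proof -
  define c where "c j = (\<chi> i. of_real (s i) * j $ i) \<bullet> j" for j :: "complex^'n"
  have c: "c (axis i u) = s i" if "u \<in> Basis" for i u
    using that by (auto simp: c_def inner_axis Basis_complex_def inner_complex_def)
  have T: "T x = b + (\<Sum>j\<in>Basis. (c j * (x \<bullet> j)) *\<^sub>R j)" for x
  proof -
    have "(\<chi> i. of_real (s i) * x $ i) \<bullet> j = c j * (x \<bullet> j)" if "j \<in> Basis" for j
      using that c by (auto simp: Basis_vec_def inner_axis scaleR_conv_of_real[symmetric])
    then show ?thesis
      unfolding T_def using euclidean_representation[of "\<chi> i. of_real (s i) * x $ i"]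
      by (metis (no_types, lifting) sum.cong)
  qed
  have "c j \<noteq> 0" if "j \<in> Basis" for j
    using that s c by (auto simp: Basis_vec_def)
  then have lborel: "lborel = density (distr lborel borel T) (\<lambda>_. \<Prod>j\<in>Basis. \<bar>c j\<bar>)"
    unfolding T by (rule lborel_affine_euclidean)
  define T' where "T' y = (\<chi> i. (y - b) $ i / of_real (s i))" for y
  have T': "T (T' y) = y" "T' (T x) = x" for x y
    using s by (auto simp: T_def T'_def vec_eq_iff)
  have "T ` B = T' -` B"
  proof
    show "T' -` B \<subseteq> T ` B"
      using T'(1) by (metis image_eqI subsetI vimageE)
  qed (use T' in auto)
  moreover have "continuous_on UNIV T'"
    unfolding T'_def by (intro continuous_on_vec_lambda continuous_intros) (simp add: s)
  ultimately show "open (T ` B)"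
    using \<open>open B\<close> open_vimage by metis
  have "inj T"
    by (rule injI) (metis T'(2))
  then have "T -` T ` B = B"
    by (rule inj_vimage_image_eq)
  moreover have "T \<in> borel_measurable borel"
    unfolding T_def by (intro borel_measurable_continuous_onI continuous_on_vec_lambda continuous_intros)
  ultimately have "emeasure lborel (T ` B) = ennreal (\<Prod>j\<in>Basis. \<bar>c j\<bar>) * emeasure lborel B"
    using \<open>open (T ` B)\<close>
    by (subst lborel) (simp add: emeasure_density nn_integral_cmult_indicator emeasure_distr borel_open)
  also have "(\<Prod>j\<in>Basis. \<bar>c j\<bar>) = (\<Prod>i\<in>UNIV. (s i)\<^sup>2)"
    by (simp add: prod_Basis_vec_complex c Basis_complex_def power2_eq_square)
  finally show "emeasure lborel (T ` B) = ennreal (\<Prod>i\<in>UNIV. (s i)\<^sup>2) * emeasure lborel B" .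
qed

lemma set_integral_ge_const_measure:
  fixes g :: "'a \<Rightarrow> real"
  assumes "integrable M g" "A \<in> sets M" "emeasure M A < \<infinity>" "\<And>x. x \<in> A \<Longrightarrow> c \<le> g x"
  shows "c * measure M A \<le> (LINT x:A|M. g x)"
proof -
  have "c * measure M A = (LINT x:A|M. c)"
    using assms(2,3) by (simp add: set_integral_const)
  also have "\<dots> \<le> (LINT x:A|M. g x)"
  proof (rule set_integral_mono)
    show "set_integrable M A (\<lambda>x. c)"
      unfolding set_integrable_def using assms(2,3)
      by (intro integrable_scaleR_left integrable_real_indicator) auto
    show "set_integrable M A g"
      unfolding set_integrable_def by (rule integrable_mult_indicator[OF assms(2,1)])
  qed (rule assms(4))
  finally show ?thesis .
qed

lemma integral_min_of_nat_tendsto: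
  fixes g :: "'a \<Rightarrow> real"
  assumes g: "integrable M g" "\<And>x. x \<in> space M \<Longrightarrow> 0 \<le> g x"
  shows "integrable M (\<lambda>x. min (g x) (real n))"
    "(\<lambda>n. LINT x|M. min (g x) (real n)) \<longlonglongrightarrow> integral\<^sup>L M g"
proof -
  have lim: "AE x in M. (\<lambda>n. min (g x) (real n)) \<longlonglongrightarrow> g x"
  proof (intro AE_I2 tendsto_eventually)
    fix x
    obtain N where "g x \<le> real N"
      using real_arch_simple by blast
    then have "min (g x) (real n) = g x" if "N \<le> n" for n
      using of_nat_mono[OF that] by simp
    then show "\<forall>\<^sub>F n in sequentially. min (g x) (real n) = g x"
      unfolding eventually_sequentially by blast
  qed
  have bound: "AE x in M. norm (min (g x) (real n)) \<le> g x" for n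
    by (intro AE_I2) (simp add: g(2) abs_of_nonneg)
  have meas: "(\<lambda>x. min (g x) (real n)) \<in> borel_measurable M" for n
    using borel_measurable_integrable[OF g(1)] by (intro borel_measurable_min) auto
  note dominated = borel_measurable_integrable[OF g(1)] meas g(1) lim bound
  show "integrable M (\<lambda>x. min (g x) (real n))"
    by (rule integrable_dominated_convergence2[OF dominated])
  show "(\<lambda>n. LINT x|M. min (g x) (real n)) \<longlonglongrightarrow> integral\<^sup>L M g"
    by (rule integral_dominated_convergence[OF dominated])
qed

lemma set_integral_small_measure:
  fixes g :: "'a \<Rightarrow> real"
  assumes g: "integrable M g" "\<And>x. x \<in> space M \<Longrightarrow> 0 \<le> g x" and "0 < e"
  obtains d where "0 < d" "\<And>A. A \<in> sets M \<Longrightarrow> emeasure M A < ennreal d \<Longrightarrow> (LINT x:A|M. g x) < e"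
proof -
  define h where "h N x = min (g x) (real N)" for N x
  have "\<forall>\<^sub>F N in sequentially. integral\<^sup>L M g - e / 2 < integral\<^sup>L M (h N)"
    using order_tendstoD(1)[OF integral_min_of_nat_tendsto(2)[OF g], of "integral\<^sup>L M g - e / 2"] \<open>0 < e\<close>
    by (simp add: h_def[abs_def])
  then obtain N where "integral\<^sup>L M g - e / 2 < integral\<^sup>L M (h N)"
    unfolding eventually_sequentially by blast
  then have N: "integral\<^sup>L M g - integral\<^sup>L M (h N) < e / 2"
    by linarith
  have h_int: "integrable M (h N)"
    unfolding h_def[abs_def] by (rule integral_min_of_nat_tendsto(1)[OF g])
  define d where "d = e / (2 * (real N + 1))"
  show ?thesis
  proof (rule that)
    show "0 < d"
      using \<open>0 < e\<close> by (simp add: d_def)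
    fix A assume A: "A \<in> sets M" "emeasure M A < ennreal d"
    have "emeasure M A < \<infinity>"
      unfolding infinity_ennreal_def using A(2) ennreal_less_top[of d] by (rule order.strict_trans)
    then have "emeasure M A = ennreal (measure M A)"
      by (intro emeasure_eq_ennreal_measure) (simp add: infinity_ennreal_def)
    then have "measure M A < d"
      using A(2) by (simp add: ennreal_less_iff)
    have ind: "integrable M (indicator A :: 'a \<Rightarrow> real)"
      using A(1) \<open>emeasure M A < \<infinity>\<close> by (rule integrable_real_indicator)
    (* g = (g - min g N) + min g N: the first part has small integral, the second is at most N *)
    have "(LINT x:A|M. g x) \<le> integral\<^sup>L M (\<lambda>x. (g x - h N x) + real N * indicator A x)"
      unfolding set_lebesgue_integral_def
    proof (rule integral_mono)
      show "integrable M (\<lambda>x. indicator A x *\<^sub>R g x)"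
        by (rule integrable_mult_indicator[OF A(1) g(1)])
      show "integrable M (\<lambda>x. (g x - h N x) + real N * indicator A x)"
        using g(1) h_int ind by simp
      show "indicator A x *\<^sub>R g x \<le> (g x - h N x) + real N * indicator A x" for x
        by (auto simp: h_def split: split_indicator)
    qed
    also have "\<dots> = (integral\<^sup>L M g - integral\<^sup>L M (h N)) + real N * measure M A"
      using g(1) h_int ind A(1) \<open>emeasure M A < \<infinity>\<close> by (simp add: integral_indicator)
    also have "\<dots> < e / 2 + real N * d"
      using N \<open>measure M A < d\<close> by (intro add_less_le_mono mult_left_mono) auto
    also have "\<dots> \<le> e"
      using \<open>0 < e\<close> by (simp add: d_def field_simps)
    finally show "(LINT x:A|M. g x) < e" .
  qed
qed

section \<open>Parabolic dilations towards a boundary point\<close>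

definition parabolic_dilation :: "real \<Rightarrow> 'n::finite \<Rightarrow> complex^'n \<Rightarrow> complex^'n" where
  "parabolic_dilation t k x = axis k 1 + (\<chi> i. of_real (if i = k then - 1 / t\<^sup>2 else 1 / t) * x $ i)"

lemma parabolic_dilation_image:
  fixes k :: "'n::finite"
  assumes "0 < t" "open B"
  shows "open (parabolic_dilation t k ` B)"
    "emeasure lborel (parabolic_dilation t k ` B)
      = ennreal ((1 / t) ^ (2 * CARD('n) + 2)) * emeasure lborel B"
proof -
  have "(\<Prod>i\<in>UNIV. (if i = k then - 1 / t\<^sup>2 else 1 / t)\<^sup>2)
      = (\<Prod>i\<in>UNIV. (1 / t)\<^sup>2 * (if i = k then (1 / t)\<^sup>2 else 1))"
    by (intro prod.cong) (auto simp: power2_eq_square)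
  also have "\<dots> = (1 / t) ^ (2 * CARD('n)) * (1 / t) ^ 2"
    by (simp add: prod.distrib prod.delta power_mult)
  also have "\<dots> = (1 / t) ^ (2 * CARD('n) + 2)"
    by (simp only: power_add)
  finally show "open (parabolic_dilation t k ` B)"
    "emeasure lborel (parabolic_dilation t k ` B)
      = ennreal ((1 / t) ^ (2 * CARD('n) + 2)) * emeasure lborel B"
    using emeasure_diagonal_image[of "\<lambda>i. if i = k then - 1 / t\<^sup>2 else 1 / t" B "axis k 1"] assms
    by (simp_all add: parabolic_dilation_def[abs_def])
qed

lemma norm_parabolic_dilation_lt_1:
  assumes "x \<in> ball (axis k 1) 1" "1 \<le> t"
  shows "norm (parabolic_dilation t k x) < 1"
proof -
  define s where "s = 1 / t\<^sup>2"
  have s: "0 < s" "s \<le> 1"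
    using assms(2) by (auto simp: s_def)
  have "(norm (parabolic_dilation t k x $ i))\<^sup>2
      = s * (norm ((x - axis k 1) $ i))\<^sup>2
        + (if i = k then 1 - s - s * (1 - s) * (norm (x $ k))\<^sup>2 else 0)" for i
  proof (cases "i = k")
    case True
    have yk: "parabolic_dilation t k x $ k = 1 - of_real s * x $ k"
      by (simp add: parabolic_dilation_def s_def)
    show ?thesis
      unfolding True yk by (simp only: cmod_power2) (simp add: power2_eq_square algebra_simps)
  next
    case False
    then show ?thesis
      by (simp add: parabolic_dilation_def s_def axis_def norm_divide power_divide)
  qed
  then have "(norm (parabolic_dilation t k x))\<^sup>2
      = s * (norm (x - axis k 1))\<^sup>2 + 1 - s - s * (1 - s) * (norm (x $ k))\<^sup>2"
    by (simp add: norm_vec_power2 sum.distrib sum_distrib_left)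
  also have "\<dots> < 1"
  proof -
    have "norm (x - axis k 1) < 1"
      using assms(1) by (simp add: dist_norm norm_minus_commute)
    then have "s * (norm (x - axis k 1))\<^sup>2 < s"
      using s by (simp add: power_less_one_iff)
    moreover have "0 \<le> s * (1 - s) * (norm (x $ k))\<^sup>2"
      using s by simp
    ultimately show ?thesis by linarith
  qed
  finally show ?thesis
    by (simp add: power_less_one_iff)
qed

lemma rotated_dilation_image:
  fixes U :: "complex^'n \<Rightarrow> complex^'n"
  assumes U: "Vector_Spaces.linear (*s) (*s) U" "\<And>y. norm (U y) = norm y"
    and "1 \<le> t" "open B" "B \<subseteq> ball (axis k 1) 1"
  defines "Y \<equiv> U ` parabolic_dilation t k ` B"
  shows "Y \<in> sets (lebesgue_on (ball 0 1))"
    "emeasure (lebesgue_on (ball 0 1)) Y = ennreal ((1 / t) ^ (2 * CARD('n) + 2) * measure lborel B)"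
proof -
  have iso: "bij U" "\<And>x y. dist (U x) (U y) = dist x y"
    using isometric_linear_bij[OF U] isometric_linear_dist[OF U] by auto
  have "open Y"
    unfolding Y_def using assms(3,4)
    by (intro open_isometry_image[OF iso] parabolic_dilation_image(1)) auto
  then have "Y \<in> sets lebesgue"
    by (simp add: borel_open sets_completionI_sets)
  moreover have "Y \<subseteq> ball 0 1"
    using assms(3,5) norm_parabolic_dilation_lt_1 by (fastforce simp: Y_def U(2))
  ultimately show "Y \<in> sets (lebesgue_on (ball 0 1))"
    by (simp add: sets_restrict_space_iff)
  have "emeasure (lebesgue_on (ball 0 1)) Y = emeasure lebesgue Y"
    using \<open>Y \<subseteq> ball 0 1\<close> by (intro emeasure_restrict_space) auto
  also have "\<dots> = emeasure lborel Y"
    using \<open>open Y\<close> by (simp add: borel_open sets_completionI_sets)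
  also have "\<dots> = emeasure lborel (parabolic_dilation t k ` B)"
    unfolding Y_def using assms(3,4)
    by (intro emeasure_isometry_image[OF iso] parabolic_dilation_image(1)) auto
  also have "\<dots> = ennreal ((1 / t) ^ (2 * CARD('n) + 2)) * emeasure lborel B"
    using assms(3,4) by (intro parabolic_dilation_image(2)) auto
  also have "emeasure lborel B = ennreal (measure lborel B)"
  proof (rule emeasure_eq_ennreal_measure)
    have "emeasure lborel B \<le> emeasure lborel (ball (axis k 1 :: complex^'n) 1)"
      by (rule emeasure_mono[OF assms(5)]) simp
    also have "\<dots> < \<infinity>"
      by (rule emeasure_lborel_ball_finite)
    finally show "emeasure lborel B \<noteq> top"
      by (simp add: infinity_ennreal_def)
  qed
  also have "ennreal ((1 / t) ^ (2 * CARD('n) + 2)) * ennreal (measure lborel B)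
      = ennreal ((1 / t) ^ (2 * CARD('n) + 2) * measure lborel B)"
    using assms(3) by (intro ennreal_mult[symmetric]) auto
  finally show "emeasure (lebesgue_on (ball 0 1)) Y
      = ennreal ((1 / t) ^ (2 * CARD('n) + 2) * measure lborel B)" .
qed

lemma nth_neq_0_if_in_ball_axis:
  fixes x :: "'a::real_normed_field ^'n"
  assumes "x \<in> ball (axis k 1) 1"
  shows "x $ k \<noteq> 0"
proof -
  have "norm ((x - axis k 1) $ k) < 1"
    using assms Finite_Cartesian_Product.norm_nth_le[of "x - axis k 1" k]
    by (simp add: dist_norm norm_minus_commute)
  then show ?thesis
    by auto
qed

text \<open>The coordinates of \<open>y / (1 - y\<^sub>k)\<close> for \<open>y = parabolic_dilation t k x\<close>, as polynomials in \<open>t\<close>.\<close>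

definition dilation_curve :: "'n \<Rightarrow> complex^'n \<Rightarrow> 'n \<Rightarrow> complex poly" where
  "dilation_curve k x j = (if j = k then [:-1, 0, 1 / x $ k:] else [:0, x $ j / x $ k:])"

lemma continuous_coeffs_on_dilation_curve:
  assumes "\<And>x. x \<in> S \<Longrightarrow> x $ k \<noteq> 0"
  shows "continuous_coeffs_on S (\<lambda>x. dilation_curve k x j)"
  unfolding dilation_curve_def using assms
  by (cases "j = k")
    (auto intro!: continuous_coeffs_on_pCons continuous_coeffs_on_const continuous_intros)

lemma degree_dilation_curve: "degree (dilation_curve k x j) \<le> 2"
  by (simp add: dilation_curve_def)

lemma dilation_curve_at_0: "(\<chi> j. poly (dilation_curve k x j) 0) = - axis k 1"
  by (simp add: vec_eq_iff dilation_curve_def axis_def)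

lemma dilation_curve_at_1_covers:
  fixes w :: "complex^'n"
  assumes "norm w < 1 / 2"
  obtains x where "x \<in> ball (axis k 1) 1" "(\<chi> j. poly (dilation_curve k x j) 1) = w"
proof -
  define x where "x = (\<chi> i. (if i = k then 1 else w $ i) / (1 + w $ k))"
  have "norm (w $ k) < 1 / 2"
    using assms Finite_Cartesian_Product.norm_nth_le[of w k] by simp
  then have "1 / 2 < norm (1 + w $ k)"
    using norm_diff_ineq[of 1 "w $ k"] by simp
  then have "1 + w $ k \<noteq> 0"
    by auto
  have "norm ((x - axis k 1) $ i) = norm (w $ i) / norm (1 + w $ k)" for i
  proof (cases "i = k")
    case True
    have "(x - axis k 1) $ k = - w $ k / (1 + w $ k)"
      using \<open>1 + w $ k \<noteq> 0\<close> by (simp add: x_def field_simps)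
    then show ?thesis
      using True by (simp add: norm_divide)
  qed (simp add: x_def axis_def norm_divide)
  then have "norm (x - axis k 1) = norm ((1 / (1 + w $ k)) *s w)"
    unfolding norm_vec_def by (intro L2_set_cong) (auto simp: norm_divide)
  also have "\<dots> < 1"
    using assms \<open>1 / 2 < norm (1 + w $ k)\<close>
    by (simp add: norm_vector_scalar_mult norm_divide divide_less_eq)
  finally have "x \<in> ball (axis k 1) 1"
    by (simp add: dist_norm norm_minus_commute)
  moreover have "(\<chi> j. poly (dilation_curve k x j) 1) = w"
    using \<open>1 + w $ k \<noteq> 0\<close> by (simp add: vec_eq_iff dilation_curve_def x_def)
  ultimately show ?thesis
    by (rule that)
qed

lemma cayley_unitary_parabolic_dilation:
  assumes "Vector_Spaces.linear (*s) (*s) U" "\<And>y. hinner (U y) \<omega> = y $ k" "x $ k \<noteq> 0" "0 < t"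
    and "z = U (parabolic_dilation t k x)"
  shows "(\<chi> j. z $ j / (1 - hinner z \<omega>)) = U (\<chi> j. poly (dilation_curve k x j) (of_real t))"
proof -
  interpret U: Vector_Spaces.linear "(*s)" "(*s)" U by fact
  define y where "y = parabolic_dilation t k x"
  have "(\<chi> j. z $ j / (1 - hinner z \<omega>)) = U ((1 / (1 - y $ k)) *s y)"
    by (simp add: assms(2,5) y_def U.scale vec_eq_iff)
  moreover have "(1 / (1 - y $ k)) *s y = (\<chi> j. poly (dilation_curve k x j) (of_real t))"
    using assms(3,4) by (auto simp: vec_eq_iff y_def parabolic_dilation_def dilation_curve_def axis_def
        field_simps power2_eq_square)
  ultimately show ?thesis
    by simp
qed

lemma not_in_Lp_ball_if_linear_growth:
  fixes f :: "complex^'n \<Rightarrow> complex" and U :: "complex^'n \<Rightarrow> complex^'n"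
  assumes U: "Vector_Spaces.linear (*s) (*s) U" "\<And>y. norm (U y) = norm y"
    and B: "0 < r" "ball x0 r \<subseteq> ball (axis k 1) 1"
    and growth: "0 < a" "\<And>x t. x \<in> ball x0 r \<Longrightarrow> T \<le> t \<Longrightarrow> a * t \<le> norm (f (U (parabolic_dilation t k x)))"
  shows "\<not> in_Lp_ball (2 * real CARD('n) + 2) f"
proof
  define n where "n = 2 * CARD('n) + 2"
  define M where "M = lebesgue_on (ball (0 :: complex^'n) 1)"
  define g where "g z = norm (f z) powr real n" for z
  define m where "m = measure lborel (ball x0 r)"
  assume "in_Lp_ball (2 * real CARD('n) + 2) f"
  moreover have "real n = 2 * real CARD('n) + 2"
    by (simp add: n_def)
  ultimately have "integrable M g"
    unfolding in_Lp_ball_def M_def g_def[abs_def] by simp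
  have "0 < m"
    using content_ball_pos[OF B(1)] by (simp add: m_def)
  obtain d where "0 < d"
    and d: "\<And>A. A \<in> sets M \<Longrightarrow> emeasure M A < ennreal d \<Longrightarrow> (LINT x:A|M. g x) < a ^ n * m"
    by (rule set_integral_small_measure[OF \<open>integrable M g\<close>, of "a ^ n * m"])
      (use \<open>0 < a\<close> \<open>0 < m\<close> in \<open>auto simp: g_def\<close>)
  define t where "t = max (max 1 T) (2 * m / d)"
  have "1 \<le> t" "T \<le> t" "0 < t"
    by (auto simp: t_def)
  define Y where "Y = U ` parabolic_dilation t k ` ball x0 r"
  have Y: "Y \<in> sets M" "emeasure M Y = ennreal ((1 / t) ^ n * m)"
    using rotated_dilation_image[OF U \<open>1 \<le> t\<close> _ B(2)] unfolding Y_def M_def n_def m_def by simp_all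
  have "(1 / t) ^ n * m \<le> (1 / t) ^ 1 * m"
    using \<open>1 \<le> t\<close> \<open>0 < m\<close> by (intro mult_right_mono power_decreasing) (auto simp: n_def)
  also have "\<dots> < d"
    using \<open>0 < d\<close> \<open>0 < m\<close> \<open>0 < t\<close> by (auto simp: t_def field_simps max_def)
  finally have "(LINT z:Y|M. g z) < a ^ n * m"
    using d Y \<open>0 < t\<close> \<open>0 < m\<close> by (simp add: ennreal_less_iff)
  moreover have "(a * t) ^ n \<le> g z" if "z \<in> Y" for z
  proof -
    obtain x where "x \<in> ball x0 r" "z = U (parabolic_dilation t k x)"
      using \<open>z \<in> Y\<close> by (auto simp: Y_def)
    then have "(a * t) powr real n \<le> g z"
      unfolding g_def using growth \<open>T \<le> t\<close> \<open>0 < t\<close> by (intro powr_mono2) auto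
    then show ?thesis
      using \<open>0 < a\<close> \<open>0 < t\<close> by (simp add: powr_realpow)
  qed
  then have "(a * t) ^ n * measure M Y \<le> (LINT z:Y|M. g z)"
    using Y \<open>integrable M g\<close> by (intro set_integral_ge_const_measure) auto
  moreover have "measure M Y = (1 / t) ^ n * m"
    using Y(2) \<open>0 < t\<close> \<open>0 < m\<close> by (intro measure_eq_emeasure_eq_ennreal) auto
  then have "(a * t) ^ n * measure M Y = a ^ n * m"
    using \<open>0 < t\<close> by (simp add: power_mult_distrib field_simps)
  ultimately show False
    by simp
qed

lemma holo_poly_constant_if_degree_0_along_dilation_curves:
  fixes Q :: "complex^'n \<Rightarrow> complex" and U :: "complex^'n \<Rightarrow> complex^'n"
  assumes "holo_poly Q" and U: "Vector_Spaces.linear (*s) (*s) U" "\<And>y. norm (U y) = norm y"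
    and P: "\<And>x t. Q (U (\<chi> j. poly (dilation_curve k x j) t)) = poly (P x) t"
      "\<And>x. x \<in> ball (axis k 1) 1 \<Longrightarrow> degree (P x) = 0"
  shows "Q z = Q (U (- axis k 1))"
proof (rule holo_poly_constant_near_0[OF assms(1)])
  fix z :: "complex^'n" assume "norm z < 1 / 2"
  obtain w where "z = U w"
    using isometric_linear_bij[OF U] by (metis bij_pointE)
  then have "norm w < 1 / 2"
    using \<open>norm z < 1 / 2\<close> U(2) by simp
  then obtain x where x: "x \<in> ball (axis k 1) 1" "(\<chi> j. poly (dilation_curve k x j) 1) = w"
    by (rule dilation_curve_at_1_covers)
  obtain c where "P x = [:c:]"
    using P(2)[OF x(1)] by (metis degree_0_id)
  then show "Q z = Q (U (- axis k 1))"
    using P(1)[of x 1] P(1)[of x 0] x(2) \<open>z = U w\<close> dilation_curve_at_0[of k x] by simp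
qed simp

lemma not_in_Lp_ball_if_dilation_polys_grow:
  fixes Q :: "complex^'n \<Rightarrow> complex" and U :: "complex^'n \<Rightarrow> complex^'n"
  assumes U: "Vector_Spaces.linear (*s) (*s) U" "\<And>y. norm (U y) = norm y" "\<And>y. hinner (U y) \<omega> = y $ k"
    and P: "\<And>x t. Q (U (\<chi> j. poly (dilation_curve k x j) t)) = poly (P x) t"
    and B: "0 < r" "ball x0 r \<subseteq> ball (axis k 1) 1"
    and growth: "0 < a" "\<And>x t. x \<in> ball x0 r \<Longrightarrow> t0 \<le> t \<Longrightarrow> a * t \<le> norm (poly (P x) (of_real t))"
  shows "\<not> in_Lp_ball (2 * real CARD('n) + 2) (\<lambda>z. Q (\<chi> j. z $ j / (1 - hinner z \<omega>)))"
proof (rule not_in_Lp_ball_if_linear_growth[OF U(1,2) B growth(1)])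
  fix x t assume x: "x \<in> ball x0 r" and t: "max t0 1 \<le> t"
  have "x $ k \<noteq> 0" "0 < t"
    using x t B(2) nth_neq_0_if_in_ball_axis[of x k] by auto
  then have "(\<chi> j. U (parabolic_dilation t k x) $ j / (1 - hinner (U (parabolic_dilation t k x)) \<omega>))
      = U (\<chi> j. poly (dilation_curve k x j) (of_real t))"
    by (intro cayley_unitary_parabolic_dilation[OF U(1,3)]) auto
  then show "a * t \<le> norm (Q (\<chi> j. U (parabolic_dilation t k x) $ j
      / (1 - hinner (U (parabolic_dilation t k x)) \<omega>)))"
    using growth(2)[OF x] t by (simp add: P)
qed

theorem lemma3p5:
  fixes Q :: "complex^'n \<Rightarrow> complex" and \<omega> :: "complex^'n"
  assumes "holo_poly Q"
    and "norm \<omega> = 1"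
    and "in_Lp_ball (2 * real CARD('n) + 2) (\<lambda>z. Q (\<chi> j. z$j / (1 - hinner z \<omega>)))"
  shows "\<exists>c. \<forall>z. Q z = c"
proof -
  obtain k :: 'n where True by simp
  obtain U where U: "Vector_Spaces.linear (*s) (*s) U" "\<And>y. norm (U y) = norm y"
    "\<And>y. hinner (U y) \<omega> = y $ k"
    using unitary_with_coordinate[OF assms(2)] by blast
  define K where "K = ball (axis k 1 :: complex^'n) 1"
  have K: "\<And>x. x \<in> K \<Longrightarrow> x $ k \<noteq> 0"
    unfolding K_def by (rule nth_neq_0_if_in_ball_axis)
  obtain P D where P: "continuous_coeffs_on K P" "\<And>x. degree (P x) \<le> D"
    "\<And>x t. Q (U (\<chi> j. poly (dilation_curve k x j) t)) = poly (P x) t"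
    by (rule holo_poly_along_linear_poly_curves[OF assms(1) U(1),
          where S = K and p = "dilation_curve k"])
      (use continuous_coeffs_on_dilation_curve[OF K] degree_dilation_curve in auto)
  show ?thesis
  proof (rule continuous_coeffs_constant_or_linear_growth[OF P(1) _ P(2)])
    show "open K"
      by (simp add: K_def)
  next
    assume "\<And>x. x \<in> K \<Longrightarrow> degree (P x) = 0"
    then show ?thesis
      using holo_poly_constant_if_degree_0_along_dilation_curves[OF assms(1) U(1,2) P(3)] K_def by blast
  next
    fix x0 r a t0
    assume "0 < r" "ball x0 r \<subseteq> K" "0 < a"
      "\<And>x t. x \<in> ball x0 r \<Longrightarrow> t0 \<le> t \<Longrightarrow> a * t \<le> norm (poly (P x) (of_real t))"
    then show ?thesis
      using not_in_Lp_ball_if_dilation_polys_grow[OF U P(3)] assms(3) K_def by blast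
  qed
qed

end
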